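(* Let $G$ be a $3$-free digraph. Let $S$ be the number of ordered $4$-tuples $(a,b,c,d)$ of distinct vertices such that the subgraph induced on $\{a,b,c,d\}$ is a directed cycle of length $4$, and let $N$ be the set of all $4$-tuples $(p,q,r,s)\in V(G)^4$ (repetitions allowed) for which there is no directed path in $G$ with exactly four vertices whose vertex set is $\{p,q,r,s\}$. Then $|N| \geq \frac{2}{3}S$.
   Context: Digraphs are finite, loopless, with at most one edge $uv$ per ordered pair. A digraph is $3$-free if it has no directed cycle of length at most $3$. A directed path with four vertices is a sequence $v_1,v_2,v_3,v_4$ of distinct vertices with $v_iv_{i+1}\in E(G)$ for $i=1,2,3$. *)

theory Defs
  imports Complex_Main
begin

definition digraph :: "'a set \<Rightarrow> ('a \<times> 'a) set \<Rightarrow> bool" where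
  "digraph V E \<longleftrightarrow> finite V \<and> E \<subseteq> V \<times> V \<and> (\<forall>v. (v, v) \<notin> E)"

definition three_free :: "('a \<times> 'a) set \<Rightarrow> bool" where
  "three_free E \<longleftrightarrow>
     (\<forall>u. (u, u) \<notin> E) \<and>
     (\<forall>u v. u \<noteq> v \<longrightarrow> \<not> ((u, v) \<in> E \<and> (v, u) \<in> E)) \<and>
     (\<forall>u v w. distinct [u, v, w] \<longrightarrow> \<not> ((u, v) \<in> E \<and> (v, w) \<in> E \<and> (w, u) \<in> E))"

definition induced_C4 :: "('a \<times> 'a) set \<Rightarrow> 'a set \<Rightarrow> bool" where
  "induced_C4 E X \<longleftrightarrow> card X = 4 \<and>
     (\<exists>w x y z. X = {w, x, y, z} \<and> E \<inter> (X \<times> X) = {(w, x), (x, y), (y, z), (z, w)})"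

definition dpath4 :: "('a \<times> 'a) set \<Rightarrow> 'a \<Rightarrow> 'a \<Rightarrow> 'a \<Rightarrow> 'a \<Rightarrow> bool" where
  "dpath4 E v1 v2 v3 v4 \<longleftrightarrow> distinct [v1, v2, v3, v4] \<and>
     (v1, v2) \<in> E \<and> (v2, v3) \<in> E \<and> (v3, v4) \<in> E"

end

theory Submission
  imports Defs
begin

text \<open>
Record each directed 4-cycle \<open>a \<rightarrow> b \<rightarrow> c \<rightarrow> d \<rightarrow> a\<close> by its pair of diagonals
\<open>((a, c), (b, d))\<close>; these pairs form a relation \<open>R\<close> on ordered vertex pairs, and the number of
\<open>R\<close>-successors of \<open>(a, c)\<close> is \<open>m(a, c) = |M(a, c)| |M(c, a)|\<close>, where \<open>M(p, q)\<close> is the set of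
midpoints of 2-paths from \<open>p\<close> to \<open>q\<close>. In a 3-free digraph \<open>M(b, d)\<close> and \<open>M(d, b)\<close> are disjoint
and no edge joins them, so a directed path on \<open>{a, c, p, q}\<close> with \<open>p, q \<in> M(b, d) \<union> M(d, b)\<close>
would stay on one side, which is impossible since \<open>c \<in> M(b, d)\<close> and \<open>a \<in> M(d, b)\<close>. For fixed
\<open>v = (a, c)\<close> this yields \<open>(|M(b, d)| + |M(d, b)|)\<^sup>2 \<ge> 4 m(b, d)\<close> tuples of \<open>N\<close> for every
\<open>R\<close>-successor \<open>(b, d)\<close>, hence at least the average \<open>4 m(u) / m(v)\<close> over the successors \<open>u\<close>.
Summing over \<open>v\<close> gives \<open>|N| \<ge> 4 \<Sum>(v,u)\<in>R m(u) / m(v) \<ge> 4 |R|\<close>, since rotating the cycle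
pairs each ratio with its reciprocal. Each cycle contributes 4 elements to \<open>R\<close> and 24 tuples to
\<open>S\<close>, so \<open>S \<le> 6 |R|\<close>.
\<close>

definition midpoints :: "('a \<times> 'a) set \<Rightarrow> 'a \<Rightarrow> 'a \<Rightarrow> 'a set" where
  "midpoints E p q = {x. (p, x) \<in> E \<and> (x, q) \<in> E}"

definition C4_diagonals :: "('a \<times> 'a) set \<Rightarrow> (('a \<times> 'a) \<times> ('a \<times> 'a)) set" where
  "C4_diagonals E = {((a, c), (b, d)). (a, b) \<in> E \<and> (b, c) \<in> E \<and> (c, d) \<in> E \<and> (d, a) \<in> E}"

definition opposite_corners :: "('a \<times> 'a) set \<Rightarrow> 'a \<times> 'a \<Rightarrow> 'a set" where
  "opposite_corners E u = midpoints E (fst u) (snd u) \<union> midpoints E (snd u) (fst u)"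

definition corner_squares :: "('a \<times> 'a) set \<Rightarrow> 'a \<times> 'a \<Rightarrow> ('a \<times> 'a) set" where
  "corner_squares E v = (\<Union>u\<in>C4_diagonals E `` {v}. opposite_corners E u \<times> opposite_corners E u)"

definition no_dpath4_tuples :: "'a set \<Rightarrow> ('a \<times> 'a) set \<Rightarrow> ('a \<times> 'a \<times> 'a \<times> 'a) set" where
  "no_dpath4_tuples V E = {(p, q, r, s). p \<in> V \<and> q \<in> V \<and> r \<in> V \<and> s \<in> V \<and>
     \<not> (\<exists>v1 v2 v3 v4. dpath4 E v1 v2 v3 v4 \<and> {v1, v2, v3, v4} = {p, q, r, s})}"

definition induced_C4_tuples :: "'a set \<Rightarrow> ('a \<times> 'a) set \<Rightarrow> ('a \<times> 'a \<times> 'a \<times> 'a) set" where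
  "induced_C4_tuples V E = {(a, b, c, d). a \<in> V \<and> b \<in> V \<and> c \<in> V \<and> d \<in> V \<and>
     distinct [a, b, c, d] \<and> induced_C4 E {a, b, c, d}}"

lemma four_mult_le_square_sum: "4 * (x::nat) * y \<le> (x + y)\<^sup>2"
proof -
  have "int (4 * x * y) \<le> int ((x + y)\<^sup>2)"
    using zero_le_power2[of "int x - int y"] by (simp add: power2_eq_square algebra_simps)
  then show ?thesis by linarith
qed

lemma card_le_card_mult_if_injective_cover:
  assumes "finite H" "finite B" "\<And>h. h \<in> H \<Longrightarrow> inj h" "S \<subseteq> (\<Union>h\<in>H. h -` B)"
  shows "card S \<le> card H * card B"
proof -
  have "card S \<le> card (\<Union>h\<in>H. h -` B)"
    using assms by (intro card_mono) (auto intro: finite_vimageI)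
  also have "\<dots> \<le> (\<Sum>h\<in>H. card (h -` B))"
    using assms(1) by (rule card_UN_le)
  also have "\<dots> \<le> (\<Sum>h\<in>H. card B)"
    using assms(2,3) card_vimage_inj_on_le[of _ UNIV B] by (intro sum_mono) auto
  finally show ?thesis by simp
qed

lemma card_le_sum_if_reciprocal_pairing:
  fixes f :: "'a \<Rightarrow> real"
  assumes "finite T" "inj_on \<rho> T" "\<rho> ` T \<subseteq> T"
    and pos: "\<And>x. x \<in> T \<Longrightarrow> f x > 0" and recip: "\<And>x. x \<in> T \<Longrightarrow> f (\<rho> x) = 1 / f x"
  shows "real (card T) \<le> sum f T"
proof -
  have "sum f T = sum (f \<circ> \<rho>) T"
    using sum.reindex[OF assms(2), of f] endo_inj_surj[OF assms(1,3,2)] by simp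
  then have "2 * sum f T = (\<Sum>x\<in>T. f x + 1 / f x)"
    using recip by (simp add: sum.distrib)
  also have "\<dots> \<ge> (\<Sum>x\<in>T. 2)"
  proof (rule sum_mono)
    fix x assume "x \<in> T"
    with pos have "f x > 0" by blast
    moreover have "(f x - 1)\<^sup>2 \<ge> 0" by simp
    ultimately show "2 \<le> f x + 1 / f x"
      by (simp add: field_simps power2_eq_square)
  qed
  finally show ?thesis by simp
qed

lemma C4_diagonals_Image: "C4_diagonals E `` {(p, q)} = midpoints E p q \<times> midpoints E q p"
  by (auto simp: C4_diagonals_def midpoints_def)

lemma card_C4_diagonals_Image_swap:
  "card (C4_diagonals E `` {prod.swap v}) = card (C4_diagonals E `` {v})"
  by (cases v) (simp add: C4_diagonals_Image card_cartesian_product)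

lemma C4_diagonals_rotate:
  "((a, c), (b, d)) \<in> C4_diagonals E \<Longrightarrow> ((b, d), (c, a)) \<in> C4_diagonals E"
  by (simp add: C4_diagonals_def)

lemma C4_diagonals_subset: "E \<subseteq> V \<times> V \<Longrightarrow> C4_diagonals E \<subseteq> (V \<times> V) \<times> (V \<times> V)"
  by (auto simp: C4_diagonals_def)

lemma midpoints_subset: "E \<subseteq> V \<times> V \<Longrightarrow> midpoints E p q \<subseteq> V"
  by (auto simp: midpoints_def)

lemma dpath4_vertices_on_one_side:
  assumes "dpath4 E v1 v2 v3 v4" "{v1, v2, v3, v4} \<subseteq> A \<union> B"
    and "\<And>x y. x \<in> A \<Longrightarrow> y \<in> B \<Longrightarrow> (x, y) \<notin> E \<and> (y, x) \<notin> E"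
  shows "{v1, v2, v3, v4} \<subseteq> A \<or> {v1, v2, v3, v4} \<subseteq> B"
  using assms unfolding dpath4_def by blast

lemma induced_C4_cycle_from:
  assumes "induced_C4 E {a, b, c, d}"
  obtains x y z where "distinct [x, y, z]" "x \<in> {b, c, d}" "y \<in> {b, c, d}" "z \<in> {b, c, d}"
    "((a, y), (x, z)) \<in> C4_diagonals E"
proof -
  obtain w x y z where X: "{a, b, c, d} = {w, x, y, z}"
    and EX: "E \<inter> ({a, b, c, d} \<times> {a, b, c, d}) = {(w, x), (x, y), (y, z), (z, w)}"
    using assms unfolding induced_C4_def by blast
  have "card (set [w, x, y, z]) = length [w, x, y, z]"
    using assms X by (simp add: induced_C4_def)
  then have dw: "distinct [w, x, y, z]" by (rule card_distinct)
  have side: "v \<in> {b, c, d}" if "v \<in> {w, x, y, z}" "v \<noteq> a" for v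
    using that unfolding X[symmetric] by blast
  have r0: "((w, y), (x, z)) \<in> C4_diagonals E"
  proof -
    have "{(w, x), (x, y), (y, z), (z, w)} \<subseteq> E"
      unfolding EX[symmetric] by (rule Int_lower1)
    then show ?thesis by (simp add: C4_diagonals_def)
  qed
  have r1: "((x, z), (y, w)) \<in> C4_diagonals E" using C4_diagonals_rotate[OF r0] .
  have r2: "((y, w), (z, x)) \<in> C4_diagonals E" using C4_diagonals_rotate[OF r1] .
  have r3: "((z, x), (w, y)) \<in> C4_diagonals E" using C4_diagonals_rotate[OF r2] .
  have "a \<in> {w, x, y, z}" using X by blast
  then consider "a = w" | "a = x" | "a = y" | "a = z" by blast
  then show thesis
  proof cases
    case 1 show thesis using r0 dw 1 by (intro that[of x y z] side) auto
  next
    case 2 show thesis using r1 dw 2 by (intro that[of y z w] side) auto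
  next
    case 3 show thesis using r2 dw 3 by (intro that[of z w x] side) auto
  next
    case 4 show thesis using r3 dw 4 by (intro that[of w x y] side) auto
  qed
qed

lemma three_free_no_2cycle: "three_free E \<Longrightarrow> (u, v) \<in> E \<Longrightarrow> (v, u) \<notin> E"
  unfolding three_free_def by (cases "u = v") auto

lemma three_free_no_3cycle:
  assumes "three_free E" "(u, v) \<in> E" "(v, w) \<in> E"
  shows "(w, u) \<notin> E"
proof -
  have "distinct [u, v, w]" if "(w, u) \<in> E"
    using assms that three_free_no_2cycle[OF assms(1)] by (auto simp: three_free_def)
  then show ?thesis
    using assms unfolding three_free_def by blast
qed

lemma midpoints_disjoint: "three_free E \<Longrightarrow> midpoints E p q \<inter> midpoints E q p = {}"
  by (auto simp: midpoints_def dest: three_free_no_2cycle)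

lemma no_edge_between_midpoints:
  "three_free E \<Longrightarrow> x \<in> midpoints E p q \<Longrightarrow> y \<in> midpoints E q p \<Longrightarrow> (x, y) \<notin> E"
  by (auto simp: midpoints_def dest: three_free_no_3cycle)

lemma no_dpath4_across_C4_diagonal:
  assumes "three_free E" "((a, c), (b, d)) \<in> C4_diagonals E"
    and "p \<in> opposite_corners E (b, d)" "q \<in> opposite_corners E (b, d)"
  shows "\<not> (\<exists>v1 v2 v3 v4. dpath4 E v1 v2 v3 v4 \<and> {v1, v2, v3, v4} = {a, c, p, q})"
proof
  let ?A = "midpoints E b d" and ?B = "midpoints E d b"
  assume "\<exists>v1 v2 v3 v4. dpath4 E v1 v2 v3 v4 \<and> {v1, v2, v3, v4} = {a, c, p, q}"
  then obtain v1 v2 v3 v4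
    where path: "dpath4 E v1 v2 v3 v4" and X: "{v1, v2, v3, v4} = {a, c, p, q}"
    by blast
  have c: "c \<in> ?A" and a: "a \<in> ?B"
    using assms(2) by (auto simp: C4_diagonals_def midpoints_def)
  have "{v1, v2, v3, v4} \<subseteq> ?A \<union> ?B"
    using assms(3,4) a c unfolding X by (simp add: opposite_corners_def)
  then have "{v1, v2, v3, v4} \<subseteq> ?A \<or> {v1, v2, v3, v4} \<subseteq> ?B"
    by (rule dpath4_vertices_on_one_side[OF path])
      (use no_edge_between_midpoints[OF assms(1), of _ b d]
         no_edge_between_midpoints[OF assms(1), of _ d b] in blast)
  moreover have "a \<in> {v1, v2, v3, v4}" "c \<in> {v1, v2, v3, v4}"
    unfolding X by simp_all
  ultimately show False
    using a c midpoints_disjoint[OF assms(1), of b d] by blast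
qed

context
  fixes V :: "'a set" and E :: "('a \<times> 'a) set"
  assumes digraph: "digraph V E" and three_free: "three_free E"
begin

lemma finite_vertices: "finite V"
  using digraph by (simp add: digraph_def)

lemma edges_subset: "E \<subseteq> V \<times> V"
  using digraph by (simp add: digraph_def)

lemma finite_midpoints: "finite (midpoints E p q)"
  using finite_subset[OF midpoints_subset[OF edges_subset] finite_vertices] .

lemma finite_C4_diagonals_Image: "finite (C4_diagonals E `` {v})"
  by (cases v) (simp add: C4_diagonals_Image finite_midpoints)

lemma finite_C4_diagonals: "finite (C4_diagonals E)"
  using finite_subset[OF C4_diagonals_subset[OF edges_subset]] finite_vertices by blast

lemma four_card_C4_diagonals_Image_le:
  "4 * card (C4_diagonals E `` {u}) \<le> card (opposite_corners E u \<times> opposite_corners E u)"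
proof (cases u)
  case (Pair b d)
  have "card (opposite_corners E u \<times> opposite_corners E u)
      = (card (midpoints E b d) + card (midpoints E d b))\<^sup>2"
    using midpoints_disjoint[OF three_free, of b d]
    by (simp add: Pair opposite_corners_def card_cartesian_product card_Un_disjoint
        finite_midpoints power2_eq_square)
  then show ?thesis
    using four_mult_le_square_sum
    by (simp add: Pair C4_diagonals_Image card_cartesian_product mult.assoc)
qed

lemma finite_corner_squares: "finite (corner_squares E v)"
  by (simp add: corner_squares_def opposite_corners_def finite_C4_diagonals_Image finite_midpoints)

lemma sum_card_corner_squares_le:
  "(\<Sum>v\<in>V \<times> V. card (corner_squares E v)) \<le> card (no_dpath4_tuples V E)"
proof -
  let ?f = "\<lambda>(v, p, q). (fst v, snd v, p, q)"
  have "(a, c, p, q) \<in> no_dpath4_tuples V E"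
    if ac: "a \<in> V" "c \<in> V" and pq: "(p, q) \<in> corner_squares E (a, c)" for a c p q
  proof -
    obtain b d where "((a, c), (b, d)) \<in> C4_diagonals E"
      and "p \<in> opposite_corners E (b, d)" "q \<in> opposite_corners E (b, d)"
      using pq by (auto simp: corner_squares_def)
    moreover have "opposite_corners E (b, d) \<subseteq> V"
      using midpoints_subset[OF edges_subset] by (simp add: opposite_corners_def)
    ultimately show ?thesis
      using ac no_dpath4_across_C4_diagonal[OF three_free]
      by (simp add: no_dpath4_tuples_def subset_iff)
  qed
  then have "?f ` (SIGMA v:V \<times> V. corner_squares E v) \<subseteq> no_dpath4_tuples V E"
    by force
  moreover have "finite (no_dpath4_tuples V E)"
    by (rule finite_subset[of _ "V \<times> V \<times> V \<times> V"]) (auto simp: no_dpath4_tuples_def finite_vertices)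
  moreover have "inj_on ?f (SIGMA v:V \<times> V. corner_squares E v)"
    by (auto simp: inj_on_def)
  ultimately have "card (SIGMA v:V \<times> V. corner_squares E v) \<le> card (no_dpath4_tuples V E)"
    by (intro card_inj_on_le)
  then show ?thesis
    using finite_vertices finite_corner_squares by simp
qed

lemma sum_ratio_le_card_corner_squares:
  "(\<Sum>u\<in>C4_diagonals E `` {v}.
      4 * real (card (C4_diagonals E `` {u})) / real (card (C4_diagonals E `` {v})))
    \<le> real (card (corner_squares E v))"
proof (cases "C4_diagonals E `` {v} = {}")
  case False
  show ?thesis
  proof (rule sum_bounded_above_divide)
    fix u assume u: "u \<in> C4_diagonals E `` {v}"
    have "card (opposite_corners E u \<times> opposite_corners E u) \<le> card (corner_squares E v)"
      using u finite_corner_squares by (intro card_mono) (auto simp: corner_squares_def)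
    then have "4 * card (C4_diagonals E `` {u}) \<le> card (corner_squares E v)"
      using four_card_C4_diagonals_Image_le le_trans by blast
    then show "4 * real (card (C4_diagonals E `` {u})) / real (card (C4_diagonals E `` {v}))
        \<le> real (card (corner_squares E v)) / real (card (C4_diagonals E `` {v}))"
      by (intro divide_right_mono) linarith+
  qed (use False finite_C4_diagonals_Image in auto)
qed simp

lemma four_card_C4_diagonals_le:
  "4 * real (card (C4_diagonals E)) \<le> real (card (no_dpath4_tuples V E))"
proof -
  let ?R = "C4_diagonals E"
  let ?m = "\<lambda>v. real (card (?R `` {v}))"
  let ?\<rho> = "\<lambda>(v, u). (u, prod.swap v)"
  have "real (card ?R) \<le> (\<Sum>x\<in>?R. ?m (snd x) / ?m (fst x))"
  proof (rule card_le_sum_if_reciprocal_pairing[where \<rho> = ?\<rho>])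
    show "?\<rho> ` ?R \<subseteq> ?R"
      by (auto intro: C4_diagonals_rotate)
    fix x assume x: "x \<in> ?R"
    then have "snd x \<in> ?R `` {fst x}" "prod.swap (fst x) \<in> ?R `` {snd x}"
      by (auto simp: C4_diagonals_def)
    then have "?R `` {fst x} \<noteq> {}" "?R `` {snd x} \<noteq> {}"
      by blast+
    then show "?m (snd x) / ?m (fst x) > 0"
      using finite_C4_diagonals_Image by (simp add: card_gt_0_iff)
    show "?m (snd (?\<rho> x)) / ?m (fst (?\<rho> x)) = 1 / (?m (snd x) / ?m (fst x))"
      by (simp add: split_beta card_C4_diagonals_Image_swap)
  qed (auto simp: inj_on_def finite_C4_diagonals)
  moreover have
    "(\<Sum>x\<in>?R. 4 * ?m (snd x) / ?m (fst x)) = 4 * (\<Sum>x\<in>?R. ?m (snd x) / ?m (fst x))"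
    by (simp add: sum_distrib_left)
  ultimately have "4 * real (card ?R) \<le> (\<Sum>x\<in>?R. 4 * ?m (snd x) / ?m (fst x))"
    by linarith
  also have "\<dots> = (\<Sum>v\<in>V \<times> V. \<Sum>u\<in>?R `` {v}. 4 * ?m u / ?m v)"
  proof -
    have "?R = (SIGMA v:V \<times> V. ?R `` {v})"
      using C4_diagonals_subset[OF edges_subset] by blast
    then show ?thesis
      by (subst sum.Sigma) (auto simp: finite_vertices finite_C4_diagonals_Image split_beta)
  qed
  also have "\<dots> \<le> (\<Sum>v\<in>V \<times> V. real (card (corner_squares E v)))"
    by (intro sum_mono sum_ratio_le_card_corner_squares)
  also have "\<dots> \<le> real (card (no_dpath4_tuples V E))"
    using sum_card_corner_squares_le by (simp only: of_nat_sum[symmetric] of_nat_le_iff)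
  finally show ?thesis .
qed


end


lemma card_induced_C4_tuples_le:
  assumes "finite (C4_diagonals E)"
  shows "card (induced_C4_tuples V E) \<le> 6 * card (C4_diagonals E)"
proof -
  define hs :: "('a \<times> 'a \<times> 'a \<times> 'a \<Rightarrow> ('a \<times> 'a) \<times> ('a \<times> 'a)) list" where
    "hs = [\<lambda>(a, b, c, d). ((a, c), (b, d)), \<lambda>(a, b, c, d). ((a, d), (b, c)),
           \<lambda>(a, b, c, d). ((a, b), (c, d)), \<lambda>(a, b, c, d). ((a, d), (c, b)),
           \<lambda>(a, b, c, d). ((a, b), (d, c)), \<lambda>(a, b, c, d). ((a, c), (d, b))]"
  have "card (induced_C4_tuples V E) \<le> card (set hs) * card (C4_diagonals E)"
  proof (rule card_le_card_mult_if_injective_cover)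
    show "\<And>h. h \<in> set hs \<Longrightarrow> inj h"
      by (auto simp: hs_def inj_def)
    show "induced_C4_tuples V E \<subseteq> (\<Union>h\<in>set hs. h -` C4_diagonals E)"
    proof
      fix t assume "t \<in> induced_C4_tuples V E"
      moreover obtain a b c d where t: "t = (a, b, c, d)"
        by (cases t)
      ultimately have "induced_C4 E {a, b, c, d}"
        by (simp add: induced_C4_tuples_def)
      then obtain x y z where "distinct [x, y, z]" "x \<in> {b, c, d}" "y \<in> {b, c, d}" "z \<in> {b, c, d}"
        and "((a, y), (x, z)) \<in> C4_diagonals E"
        by (rule induced_C4_cycle_from)
      then show "t \<in> (\<Union>h\<in>set hs. h -` C4_diagonals E)"
        by (auto simp: hs_def t)
    qed
  qed (simp_all add: assms)
  moreover have "card (set hs) \<le> 6"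
    using card_length[of hs] by (simp add: hs_def)
  ultimately show ?thesis
    using mult_le_mono1 le_trans by blast
qed


theorem mainTheorem17:
  fixes V :: "'a set" and E :: "('a \<times> 'a) set"
  assumes "digraph V E" and "three_free E"
  shows "real (card {(p, q, r, s). p \<in> V \<and> q \<in> V \<and> r \<in> V \<and> s \<in> V \<and>
                 \<not> (\<exists>v1 v2 v3 v4. dpath4 E v1 v2 v3 v4 \<and> {v1, v2, v3, v4} = {p, q, r, s})})
         \<ge> 2 / 3 * real (card {(a, b, c, d). a \<in> V \<and> b \<in> V \<and> c \<in> V \<and> d \<in> V \<and>
                 distinct [a, b, c, d] \<and> induced_C4 E {a, b, c, d}})"
proof -
  have "4 * real (card (C4_diagonals E)) \<le> real (card (no_dpath4_tuples V E))"
    using assms by (rule four_card_C4_diagonals_le)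
  moreover have "real (card (induced_C4_tuples V E)) \<le> 6 * real (card (C4_diagonals E))"
    using card_induced_C4_tuples_le[OF finite_C4_diagonals[OF assms]]
    by (metis of_nat_le_iff of_nat_mult of_nat_numeral)
  ultimately show ?thesis
    unfolding no_dpath4_tuples_def induced_C4_tuples_def by linarith
qed

end
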